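(* Let $(X,G)$ be topologically transitive and $\lambda$ a $G$-invariant Borel probability measure on $X$. There is an at most countable family $\mathcal N_c\subseteq\mathcal N$ such that $\bigcap_{N\in\mathcal N}K_t(N)=\bigcap_{N\in\mathcal N_c}K_t(N)$, and consequently $\bigcap_{N\in\mathcal N}K_0(N)=\bigcap_{N\in\mathcal N_c}K_0(N)$ for every $G$-invariant $X_0\subseteq X_t$ with $\lambda(X_0)=1$.
   Context: $G$ is a group acting by homeomorphisms on a compact metrizable space $X$; $X_t:=\{x\in X:\overline{Gx}=X\}$. $\mathcal N$ is the family of all closed $G$-invariant (for the diagonal action) subsets of $X^2$; for $N\in\mathcal N$, $N_x:=\{y:(x,y)\in N\}$, $d_N(x,x'):=\lambda(N_x\triangle N_{x'})$, $K_t(N):=\{(x,x')\in X_t^2:d_N(x,x')=0\}$ and $K_0(N):=K_t(N)\cap X_0^2$. *)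

theory Defs
  imports "HOL-Probability.Probability" "HOL-Algebra.Group"
begin

text \<open>The compact metrizable space X is the whole type 'a (class metric_space, with
  compact UNIV). The group G is a HOL-Algebra group; phi g is the homeomorphism
  by which g acts.\<close>

definition action_by_homeos :: "('g, 'b) monoid_scheme \<Rightarrow> ('g \<Rightarrow> 'a::topological_space \<Rightarrow> 'a) \<Rightarrow> bool" where
  "action_by_homeos G phi \<longleftrightarrow>
     group G \<and>
     (\<forall>g\<in>carrier G. homeomorphism UNIV UNIV (phi g) (phi (inv\<^bsub>G\<^esub> g))) \<and>
     phi \<one>\<^bsub>G\<^esub> = id \<and>
     (\<forall>g\<in>carrier G. \<forall>h\<in>carrier G. phi (g \<otimes>\<^bsub>G\<^esub> h) = phi g \<circ> phi h)"

definition top_transitive :: "('g, 'b) monoid_scheme \<Rightarrow> ('g \<Rightarrow> 'a::topological_space \<Rightarrow> 'a) \<Rightarrow> bool" where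
  "top_transitive G phi \<longleftrightarrow>
     (\<forall>U V. open U \<and> open V \<and> U \<noteq> {} \<and> V \<noteq> {} \<longrightarrow>
        (\<exists>g\<in>carrier G. phi g ` U \<inter> V \<noteq> {}))"

definition orbit :: "('g, 'b) monoid_scheme \<Rightarrow> ('g \<Rightarrow> 'a \<Rightarrow> 'a) \<Rightarrow> 'a \<Rightarrow> 'a set" where
  "orbit G phi x = (\<lambda>g. phi g x) ` carrier G"

definition Xt :: "('g, 'b) monoid_scheme \<Rightarrow> ('g \<Rightarrow> 'a::topological_space \<Rightarrow> 'a) \<Rightarrow> 'a set" where
  "Xt G phi = {x. closure (orbit G phi x) = UNIV}"

definition invariant_set :: "('g, 'b) monoid_scheme \<Rightarrow> ('g \<Rightarrow> 'a \<Rightarrow> 'a) \<Rightarrow> 'a set \<Rightarrow> bool" where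
  "invariant_set G phi A \<longleftrightarrow> (\<forall>g\<in>carrier G. \<forall>x\<in>A. phi g x \<in> A)"

definition NN :: "('g, 'b) monoid_scheme \<Rightarrow> ('g \<Rightarrow> 'a::topological_space \<Rightarrow> 'a) \<Rightarrow> ('a \<times> 'a) set set" where
  "NN G phi = {N. closed N \<and> (\<forall>g\<in>carrier G. \<forall>x y. (x, y) \<in> N \<longrightarrow> (phi g x, phi g y) \<in> N)}"

definition fibre :: "('a \<times> 'a) set \<Rightarrow> 'a \<Rightarrow> 'a set" where
  "fibre N x = {y. (x, y) \<in> N}"

definition dN :: "'a measure \<Rightarrow> ('a \<times> 'a) set \<Rightarrow> 'a \<Rightarrow> 'a \<Rightarrow> real" where
  "dN lam N x x' = measure lam (sym_diff (fibre N x) (fibre N x'))"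

definition Kt :: "('g, 'b) monoid_scheme \<Rightarrow> ('g \<Rightarrow> 'a::topological_space \<Rightarrow> 'a) \<Rightarrow> 'a measure
    \<Rightarrow> ('a \<times> 'a) set \<Rightarrow> ('a \<times> 'a) set" where
  "Kt G phi lam N = {(x, x'). x \<in> Xt G phi \<and> x' \<in> Xt G phi \<and> dN lam N x x' = 0}"

definition K0 :: "('g, 'b) monoid_scheme \<Rightarrow> ('g \<Rightarrow> 'a::topological_space \<Rightarrow> 'a) \<Rightarrow> 'a measure
    \<Rightarrow> 'a set \<Rightarrow> ('a \<times> 'a) set \<Rightarrow> ('a \<times> 'a) set" where
  "K0 G phi lam X0 N = Kt G phi lam N \<inter> (X0 \<times> X0)"

end

theory Submission
  imports Defs
begin

text \<open>For closed invariant \<open>N\<close>, the map \<open>x \<mapsto> \<lambda>(N\<^sub>x)\<close> is upper semicontinuous (closed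
  fibres, outer regularity and the tube lemma) and invariant under \<open>G\<close>, hence constant on
  the set \<open>X\<^sub>t\<close> of points with dense orbit. Consequently \<open>d\<^sub>N(y, x) = 2 \<lambda>(N\<^sub>y - N\<^sub>x)\<close> on
  \<open>X\<^sub>t\<close>, which is small for \<open>y\<close> near \<open>x\<close>, so \<open>{d\<^sub>N > 0}\<close> is relatively open in \<open>X\<^sub>t\<^sup>2\<close>.
  A compact metric space is second countable, so countably many \<open>N\<close> already cover the union
  of these open sets, i.e. cut out the same intersection of the \<open>K\<^sub>t(N)\<close>.\<close>

lemma closed_fibre:
  fixes N :: "('a::topological_space \<times> 'a) set"
  assumes "closed N"
  shows "closed (fibre N x)"
proof -
  have "fibre N x = Pair x -` N" by (auto simp: fibre_def)
  then show ?thesis using assms by (simp add: closed_vimage continuous_intros)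
qed

lemma tube_fibre_subset:
  fixes N :: "('a::topological_space \<times> 'a) set"
  assumes "compact (UNIV :: 'a set)" "closed N" "open V" "fibre N x \<subseteq> V"
  shows "\<exists>U. open U \<and> x \<in> U \<and> (\<forall>y\<in>U. fibre N y \<subseteq> V)"
proof -
  have "open (- N \<union> UNIV \<times> V)" using assms(2,3) by (intro open_Un open_Times) auto
  moreover have "{x} \<times> UNIV \<subseteq> - N \<union> UNIV \<times> V" using assms(4) by (auto simp: fibre_def)
  ultimately obtain U where "x \<in> U" "open U" "U \<times> UNIV \<subseteq> - N \<union> UNIV \<times> V"
    using Elementary_Topology.tube_lemma[OF assms(1)] by metis
  then show ?thesis by (auto simp: fibre_def)
qed

lemma compact_metric_countable_base:
  assumes "compact (UNIV :: 'a set)"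
  obtains B :: "'a::metric_space set set" where "countable B" "\<And>b. b \<in> B \<Longrightarrow> open b"
    "\<And>U x. open U \<Longrightarrow> x \<in> U \<Longrightarrow> \<exists>b\<in>B. x \<in> b \<and> b \<subseteq> U"
proof -
  have "\<forall>n::nat. \<exists>K. finite K \<and> (UNIV :: 'a set) \<subseteq> (\<Union>c\<in>K. ball c (1 / Suc n))"
    using assms by (simp add: compact_eq_totally_bounded)
  then obtain K :: "nat \<Rightarrow> 'a set"
    where K: "\<And>n. finite (K n)" "\<And>n. UNIV \<subseteq> (\<Union>c\<in>K n. ball c (1 / Suc n))"
    by metis
  define B where "B = (\<Union>n. (\<lambda>c. ball c (1 / Suc n)) ` K n)"
  show thesis
  proof
    show "countable B" unfolding B_def using K(1) by (intro countable_UN) (auto intro: countable_finite)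
    show "open b" if "b \<in> B" for b using that by (auto simp: B_def)
    fix U :: "'a set" and x assume "open U" "x \<in> U"
    then obtain r where "r > 0" "ball x r \<subseteq> U" by (meson open_contains_ball)
    then obtain n :: nat where "inverse (Suc n) < r / 2" by (metis half_gt_zero reals_Archimedean)
    then have n: "2 / Suc n < r" by (simp add: field_simps)
    obtain c where c: "c \<in> K n" "x \<in> ball c (1 / Suc n)" using K(2) by blast
    have "ball c (1 / Suc n) \<subseteq> ball x r"
    proof
      fix y assume "y \<in> ball c (1 / Suc n)"
      then have "dist x y < 2 / Suc n"
        using c(2) dist_triangle3[of x y c] by (simp add: dist_commute)
      then show "y \<in> ball x r" using n by simp
    qed
    then show "\<exists>b\<in>B. x \<in> b \<and> b \<subseteq> U" using c \<open>ball x r \<subseteq> U\<close> by (auto simp: B_def)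
  qed
qed

lemma countable_subfamily_Union_eq:
  fixes B :: "'a::topological_space set set" and A :: "'i \<Rightarrow> ('a \<times> 'a) set"
  assumes "countable B" and base: "\<And>U x. open U \<Longrightarrow> x \<in> U \<Longrightarrow> \<exists>b\<in>B. x \<in> b \<and> b \<subseteq> U"
    and sub: "\<And>i. i \<in> I \<Longrightarrow> A i \<subseteq> T"
    and rect: "\<And>i p. i \<in> I \<Longrightarrow> p \<in> A i \<Longrightarrow>
      \<exists>U V. open U \<and> open V \<and> p \<in> U \<times> V \<and> U \<times> V \<inter> T \<subseteq> A i"
  obtains J where "J \<subseteq> I" "countable J" "(\<Union>i\<in>J. A i) = (\<Union>i\<in>I. A i)"
proof -
  define S where "S = {(b, b') \<in> B \<times> B. \<exists>i\<in>I. b \<times> b' \<inter> T \<subseteq> A i}"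
  define ch where "ch bb = (SOME i. i \<in> I \<and> fst bb \<times> snd bb \<inter> T \<subseteq> A i)" for bb
  have ch: "ch bb \<in> I \<and> fst bb \<times> snd bb \<inter> T \<subseteq> A (ch bb)" if "bb \<in> S" for bb
    unfolding ch_def by (rule someI_ex) (use that in \<open>auto simp: S_def\<close>)
  have "(\<Union>i\<in>I. A i) \<subseteq> (\<Union>i\<in>ch ` S. A i)"
  proof
    fix p assume "p \<in> (\<Union>i\<in>I. A i)"
    then obtain i where i: "i \<in> I" "p \<in> A i" by blast
    then obtain U V where UV: "open U" "open V" "p \<in> U \<times> V" "U \<times> V \<inter> T \<subseteq> A i"
      using rect by blast
    obtain b b' where b: "b \<in> B" "fst p \<in> b" "b \<subseteq> U" and b': "b' \<in> B" "snd p \<in> b'" "b' \<subseteq> V"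
      using base UV by (metis mem_Times_iff)
    have "b \<times> b' \<inter> T \<subseteq> A i" using b(3) b'(3) UV(4) by blast
    with b b' i have "(b, b') \<in> S" by (auto simp: S_def)
    moreover have "p \<in> b \<times> b' \<inter> T" using b b' sub i by (auto simp: mem_Times_iff)
    ultimately show "p \<in> (\<Union>i\<in>ch ` S. A i)" using ch by fastforce
  qed
  moreover have "countable S"
    unfolding S_def using \<open>countable B\<close> by (auto intro: countable_subset[of _ "B \<times> B"])
  moreover have "ch ` S \<subseteq> I" using ch by blast
  ultimately show thesis by (intro that[of "ch ` S"]) auto
qed

lemma dN_sym: "dN M N x y = dN M N y x"
  by (simp add: dN_def Un_commute)

lemma UNIV_in_NN: "UNIV \<in> NN G phi"
  by (simp add: NN_def)

lemma Kt_eq_Diff: "Kt G phi M N = Xt G phi \<times> Xt G phi - {(y, y'). dN M N y y' > 0}"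
  by (auto simp: Kt_def dN_def order.strict_iff_order)

lemma INT_K0_eq:
  "F \<noteq> {} \<Longrightarrow> (\<Inter>N\<in>F. K0 G phi M X0 N) = (\<Inter>N\<in>F. Kt G phi M N) \<inter> X0 \<times> X0"
  by (auto simp: K0_def)

context
  fixes M :: "'a::metric_space measure"
  assumes finite: "finite_measure M" and borel: "sets M = sets borel"
begin

interpretation finite_measure M by (rule finite)

lemma closed_in_sets: "closed C \<Longrightarrow> C \<in> sets M"
  using borel by (simp add: borel_closed)

lemma open_in_sets: "open C \<Longrightarrow> C \<in> sets M"
  using borel by (simp add: borel_open)

lemma fibre_in_sets: "closed N \<Longrightarrow> fibre N x \<in> sets M"
  by (simp add: closed_in_sets closed_fibre)

lemma outer_regular_closed:
  assumes "closed C" "e > 0"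
  obtains V where "open V" "C \<subseteq> V" "measure M (V - C) < e"
proof -
  define V where "V n = (\<Union>c\<in>C. ball c (1 / Suc n))" for n :: nat
  have "decseq V"
    by (rule decseq_SucI) (force simp: V_def intro: order.strict_trans2 frac_le)
  moreover have "range V \<subseteq> sets M" by (auto simp: V_def intro: open_in_sets)
  ultimately have "(\<lambda>n. measure M (V n)) \<longlonglongrightarrow> measure M (\<Inter>n. V n)"
    by (rule finite_Lim_measure_decseq[rotated])
  moreover have "(\<Inter>n. V n) = C"
  proof
    show "C \<subseteq> (\<Inter>n. V n)" by (auto simp: V_def)
    have "y \<in> C" if y: "\<forall>n. y \<in> V n" for y
      unfolding closed_approachable[OF \<open>closed C\<close>, symmetric]
    proof (intro allI impI)
      fix \<epsilon> :: real assume "\<epsilon> > 0"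
      then obtain n :: nat where "1 / Suc n < \<epsilon>"
        using reals_Archimedean by (auto simp: inverse_eq_divide)
      moreover obtain c where "c \<in> C" "dist c y < 1 / Suc n" using y by (auto simp: V_def)
      ultimately show "\<exists>c\<in>C. dist c y < \<epsilon>" by force
    qed
    then show "(\<Inter>n. V n) \<subseteq> C" by blast
  qed
  ultimately have "eventually (\<lambda>n. measure M (V n) < measure M C + e) sequentially"
    using \<open>e > 0\<close> by (intro order_tendstoD(2)) auto
  then obtain n where n: "measure M (V n) < measure M C + e"
    by (auto simp: eventually_sequentially)
  have "C \<subseteq> V n" by (force simp: V_def)
  moreover have "measure M (V n - C) = measure M (V n) - measure M C"
    using \<open>C \<subseteq> V n\<close> \<open>closed C\<close>
    by (intro finite_measure_Diff) (auto intro: open_in_sets closed_in_sets simp: V_def)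
  ultimately show thesis using n by (intro that[of "V n"]) (auto simp: V_def)
qed

lemma measure_fibre_Diff_small_near:
  fixes N :: "('a \<times> 'a) set"
  assumes "compact (UNIV :: 'a set)" "closed N" "e > 0"
  shows "\<exists>U. open U \<and> x \<in> U \<and> (\<forall>y\<in>U. measure M (fibre N y - fibre N x) < e)"
proof -
  obtain V where V: "open V" "fibre N x \<subseteq> V" "measure M (V - fibre N x) < e"
    using outer_regular_closed[OF closed_fibre[OF assms(2)] assms(3)] by blast
  obtain U where U: "open U" "x \<in> U" "\<forall>y\<in>U. fibre N y \<subseteq> V"
    using tube_fibre_subset[OF assms(1,2) V(1,2)] by blast
  have "V - fibre N x \<in> sets M" by (intro sets.Diff open_in_sets V(1) fibre_in_sets assms(2))
  then have "measure M (fibre N y - fibre N x) \<le> measure M (V - fibre N x)" if "y \<in> U" for y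
    using U(3) that by (intro finite_measure_mono) auto
  then show ?thesis using U V(3) by (meson order.strict_trans1)
qed

lemma dN_triangle:
  assumes "closed N"
  shows "dN M N x z \<le> dN M N x y + dN M N y z"
proof -
  let ?A = "fibre N x" and ?B = "fibre N y" and ?C = "fibre N z"
  have "measure M (sym_diff ?A ?C) \<le> measure M (sym_diff ?A ?B \<union> sym_diff ?B ?C)"
    by (intro finite_measure_mono) (auto intro!: sets.Un sets.Diff fibre_in_sets assms)
  also have "\<dots> \<le> measure M (sym_diff ?A ?B) + measure M (sym_diff ?B ?C)"
    by (intro measure_Un_le) (auto intro!: sets.Un sets.Diff fibre_in_sets assms)
  finally show ?thesis by (simp add: dN_def)
qed

lemma dN_eq_twice_measure_Diff:
  assumes "closed N" "measure M (fibre N x) = measure M (fibre N y)"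
  shows "dN M N x y = 2 * measure M (fibre N x - fibre N y)"
proof -
  let ?A = "fibre N x" and ?B = "fibre N y"
  have A: "?A \<in> sets M" and B: "?B \<in> sets M" using fibre_in_sets[OF assms(1)] by auto
  have "measure M (?B - ?A) = measure M (?A - ?B)"
    using finite_measure_Diff'[OF A B] finite_measure_Diff'[OF B A] assms(2) by (simp add: Int_commute)
  moreover have "measure M (sym_diff ?A ?B) = measure M (?A - ?B) + measure M (?B - ?A)"
    using A B by (intro finite_measure_Union) auto
  ultimately show ?thesis by (simp add: dN_def)
qed

end

lemma action_inv_closed:
  "action_by_homeos G phi \<Longrightarrow> g \<in> carrier G \<Longrightarrow> inv\<^bsub>G\<^esub> g \<in> carrier G"
  by (simp add: action_by_homeos_def group.inv_closed)

lemma fibre_action: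
  assumes "action_by_homeos G phi" "N \<in> NN G phi" "g \<in> carrier G"
  shows "fibre N (phi g x) = phi (inv\<^bsub>G\<^esub> g) -` fibre N x"
proof -
  have g': "inv\<^bsub>G\<^esub> g \<in> carrier G" using action_inv_closed assms(1,3) .
  have "phi (inv\<^bsub>G\<^esub> g) (phi g y) = y" "phi g (phi (inv\<^bsub>G\<^esub> g) y) = y" for y
    using assms(1,3) by (auto simp: action_by_homeos_def homeomorphism_def)
  with assms(2,3) g' show ?thesis
    unfolding NN_def fibre_def by (auto; metis)
qed

context
  fixes G :: "('g, 'b) monoid_scheme"
    and phi :: "'g \<Rightarrow> 'a::metric_space \<Rightarrow> 'a"
    and M :: "'a measure"
  assumes compact: "compact (UNIV :: 'a set)"
    and action: "action_by_homeos G phi"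
    and finite: "finite_measure M"
    and borel: "sets M = sets borel"
    and invariant: "\<forall>g\<in>carrier G. \<forall>A\<in>sets M. measure M (phi g -` A) = measure M A"
begin

interpretation finite_measure M by (rule finite)

lemma closed_of_NN: "N \<in> NN G phi \<Longrightarrow> closed N"
  by (simp add: NN_def)

lemma measure_fibre_action:
  assumes "N \<in> NN G phi" "g \<in> carrier G"
  shows "measure M (fibre N (phi g x)) = measure M (fibre N x)"
  using fibre_action[OF action assms] action_inv_closed[OF action assms(2)] invariant
    fibre_in_sets[OF finite borel closed_of_NN[OF assms(1)]]
  by simp

lemma measure_fibre_Xt_le:
  assumes N: "N \<in> NN G phi" and x: "x \<in> Xt G phi"
  shows "measure M (fibre N x) \<le> measure M (fibre N y)"
proof (rule field_le_epsilon)
  fix e :: real assume "e > 0"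
  obtain U where U: "open U" "y \<in> U" "\<forall>z\<in>U. measure M (fibre N z - fibre N y) < e"
    using measure_fibre_Diff_small_near[OF finite borel compact closed_of_NN[OF N] \<open>e > 0\<close>] by blast
  have "U \<inter> orbit G phi x \<noteq> {}"
    using x U(1,2) open_Int_closure_eq_empty[OF U(1)] by (auto simp: Xt_def)
  then obtain g where g: "g \<in> carrier G" "phi g x \<in> U" by (auto simp: orbit_def)
  let ?A = "fibre N (phi g x)" and ?B = "fibre N y"
  have "measure M ?A \<le> measure M (?A - ?B) + measure M ?B"
    using fibre_in_sets[OF finite borel closed_of_NN[OF N]]
    by (simp add: finite_measure_Diff' finite_measure_mono)
  then show "measure M (fibre N x) \<le> measure M (fibre N y) + e"
    using U(3) g measure_fibre_action[OF N g(1)] by fastforce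
qed

lemma measure_fibre_Xt_eq:
  "N \<in> NN G phi \<Longrightarrow> x \<in> Xt G phi \<Longrightarrow> y \<in> Xt G phi \<Longrightarrow>
    measure M (fibre N x) = measure M (fibre N y)"
  using measure_fibre_Xt_le by (meson antisym)

lemma dN_Xt_small_near:
  assumes N: "N \<in> NN G phi" and x: "x \<in> Xt G phi" and "e > 0"
  shows "\<exists>U. open U \<and> x \<in> U \<and> (\<forall>y\<in>U \<inter> Xt G phi. dN M N y x < e)"
proof -
  obtain U where U: "open U" "x \<in> U" "\<forall>y\<in>U. measure M (fibre N y - fibre N x) < e / 2"
    using measure_fibre_Diff_small_near[OF finite borel compact closed_of_NN[OF N]] \<open>e > 0\<close>
    by (metis half_gt_zero)
  have "dN M N y x = 2 * measure M (fibre N y - fibre N x)" if "y \<in> Xt G phi" for y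
    using dN_eq_twice_measure_Diff[OF finite borel closed_of_NN[OF N]]
      measure_fibre_Xt_eq[OF N that x] by blast
  then show ?thesis using U by fastforce
qed

lemma dN_Xt_pos_near:
  assumes N: "N \<in> NN G phi" and x: "x \<in> Xt G phi" and x': "x' \<in> Xt G phi"
    and pos: "dN M N x x' > 0"
  shows "\<exists>U U'. open U \<and> open U' \<and> (x, x') \<in> U \<times> U' \<and>
    U \<times> U' \<inter> Xt G phi \<times> Xt G phi \<subseteq> {(y, y'). dN M N y y' > 0}"
proof -
  define d where "d = dN M N x x'"
  have "d > 0" using pos by (simp add: d_def)
  obtain U where U: "open U" "x \<in> U" "\<forall>y\<in>U \<inter> Xt G phi. dN M N y x < d / 3"
    using dN_Xt_small_near[OF N x, of "d / 3"] \<open>d > 0\<close> by auto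
  obtain U' where U': "open U'" "x' \<in> U'" "\<forall>y'\<in>U' \<inter> Xt G phi. dN M N y' x' < d / 3"
    using dN_Xt_small_near[OF N x', of "d / 3"] \<open>d > 0\<close> by auto
  have "dN M N y y' > 0" if y: "y \<in> U \<inter> Xt G phi" and y': "y' \<in> U' \<inter> Xt G phi" for y y'
  proof -
    note tri = dN_triangle[OF finite borel closed_of_NN[OF N]]
    have "d \<le> dN M N x y + dN M N y y' + dN M N y' x'"
      using tri[of x x' y] tri[of y x' y'] by (simp add: d_def)
    moreover have "dN M N x y < d / 3" using U(3) y dN_sym by metis
    moreover have "dN M N y' x' < d / 3" using U'(3) y' by blast
    ultimately show ?thesis using \<open>d > 0\<close> by linarith
  qed
  then show ?thesis using U U' by fast
qed

text \<open>\<open>UNIV \<in> Nc\<close> matters: \<open>K\<^sub>t(UNIV) = X\<^sub>t\<^sup>2\<close>, while an empty intersection would be all of \<open>X\<^sup>2\<close>.\<close>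

lemma Kt_countable_subfamily:
  obtains Nc where "countable Nc" "Nc \<subseteq> NN G phi" "UNIV \<in> Nc"
    "(\<Inter>N\<in>Nc. Kt G phi M N) = (\<Inter>N\<in>NN G phi. Kt G phi M N)"
proof -
  define Pos where "Pos N = Xt G phi \<times> Xt G phi \<inter> {(y, y'). dN M N y y' > 0}" for N
  obtain B :: "'a set set"
    where B: "countable B" "\<And>U x. open U \<Longrightarrow> x \<in> U \<Longrightarrow> \<exists>b\<in>B. x \<in> b \<and> b \<subseteq> U"
    using compact_metric_countable_base[OF compact] by metis
  have rect: "\<exists>U U'. open U \<and> open U' \<and> p \<in> U \<times> U' \<and> U \<times> U' \<inter> Xt G phi \<times> Xt G phi \<subseteq> Pos N"
    if "N \<in> NN G phi" "p \<in> Pos N" for N p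
    using dN_Xt_pos_near[OF that(1), of "fst p" "snd p"] that(2) by (auto simp: Pos_def)
  obtain J where J: "J \<subseteq> NN G phi" "countable J" "(\<Union>N\<in>J. Pos N) = (\<Union>N\<in>NN G phi. Pos N)"
    by (rule countable_subfamily_Union_eq[OF B _ rect]) (auto simp: Pos_def)
  have Kt: "(\<Inter>N\<in>F. Kt G phi M N) = Xt G phi \<times> Xt G phi - (\<Union>N\<in>F. Pos N)" if "F \<noteq> {}" for F
    using that by (auto simp: Kt_eq_Diff Pos_def)
  have "Pos UNIV = {}" by (simp add: Pos_def dN_def fibre_def)
  with J(3) have "(\<Inter>N\<in>insert UNIV J. Kt G phi M N) = (\<Inter>N\<in>NN G phi. Kt G phi M N)"
    using UNIV_in_NN[of G phi] by (subst (1 2) Kt) auto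
  with J(1,2) show thesis using UNIV_in_NN[of G phi] by (intro that[of "insert UNIV J"]) auto
qed

end

theorem mainTheorem10:
  fixes G :: "('g, 'b) monoid_scheme"
    and phi :: "'g \<Rightarrow> 'a::metric_space \<Rightarrow> 'a"
    and lam :: "'a measure"
  assumes "compact (UNIV :: 'a set)"
    and "action_by_homeos G phi"
    and "top_transitive G phi"
    and "prob_space lam"
    and "sets lam = sets borel"
    and "\<forall>g\<in>carrier G. \<forall>A\<in>sets lam. measure lam (phi g -` A) = measure lam A"
  shows "\<exists>Nc. countable Nc \<and> Nc \<subseteq> NN G phi \<and>
           (\<Inter>N\<in>NN G phi. Kt G phi lam N) = (\<Inter>N\<in>Nc. Kt G phi lam N) \<and>
           (\<forall>X0. X0 \<subseteq> Xt G phi \<and> invariant_set G phi X0 \<and> X0 \<in> sets lam \<and> measure lam X0 = 1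
              \<longrightarrow> (\<Inter>N\<in>NN G phi. K0 G phi lam X0 N) = (\<Inter>N\<in>Nc. K0 G phi lam X0 N))"
proof -
  obtain Nc where Nc: "countable Nc" "Nc \<subseteq> NN G phi" "UNIV \<in> Nc"
    "(\<Inter>N\<in>Nc. Kt G phi lam N) = (\<Inter>N\<in>NN G phi. Kt G phi lam N)"
    using Kt_countable_subfamily[OF assms(1,2) prob_space.finite_measure[OF assms(4)] assms(5,6)] .
  have "NN G phi \<noteq> {}" "Nc \<noteq> {}" using Nc(3) UNIV_in_NN by auto
  then show ?thesis using Nc by (intro exI[of _ Nc]) (simp add: INT_K0_eq)
qed

end
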